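(* For every $n\in\mathbb{N}$, \[ \sum_{j=0}^{n}\sum_{i=0}^{j}\frac{\binom{n+1}{i}}{\binom{2n+1}{j}} =\sum_{k=0}^{\lfloor n/2\rfloor}(-1)^k\frac{\binom{n+1}{2k+1}}{\binom{n}{k}} =(n+1)\sum_{k=1}^{n+1}\frac{2^k}{k\binom{n+1+k}{k}} =\frac{n+1}{2^{n+1}}\sum_{k=1}^{n+1}\frac{2^k}{k} =\frac{1}{2^n}\sum_{j=0}^{n}\sum_{i=0}^{j}\frac{\binom{n+1}{i}}{\binom{n}{j}}. \] *)

theory Defs
  imports Complex_Main
begin

end

theory Submission
  imports Defs "HOL-Analysis.Analysis"
begin

text \<open>
  The identity \<open>1 / C(N, j) = (N + 1) B(j + 1, N - j + 1)\<close> turns the first two sums into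
  integrals over \<open>[0, 1]\<close> of polynomials in \<open>t\<close>. For the first, the polynomial multiplied by
  \<open>1 - 2t\<close> telescopes to \<open>(1 - t)^(n+1) (1 - (2t)^(n+1))\<close>, so it equals
  \<open>(1 - t)^(n+1) \<Sum>k\<le>n. (2t)^k\<close>, whose integral is the third sum. For the second, the
  Fibonacci-polynomial identity \<open>\<Sum>k. C(n-k, k) (-t(1-t))^k = \<Sum>j\<le>n. t^j (1-t)^(n-j)\<close> makes it
  equal to \<open>U n = \<Sum>j\<le>n. 1 / C(n, j)\<close>. The fifth sum is \<open>U n\<close> as well, because the partial
  row sums of indices \<open>j\<close> and \<open>n - j\<close> add up to \<open>2^(n+1)\<close>. Finally
  \<open>W m = \<Sum>k=1..m. 2^k B(k, m + 1)\<close> satisfies \<open>W (m+1) = W m / 2 + 1 / (m+1)\<close>, which gives the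
  fourth sum and, compared with \<open>U (n+1) = 1 + (n+2) / (2(n+1)) U n\<close>, the relation
  \<open>U n = (n+1) W (n+1)\<close>.
\<close>

section \<open>The Beta function at positive integers\<close>

lemma Beta_of_nat: "Beta (real (Suc a)) (real (Suc b)) = fact a * fact b / fact (Suc (a + b))"
proof -
  have Gamma: "Gamma (real (Suc m)) = fact m" for m
    using Gamma_fact[of m] by simp
  have "real (Suc a) + real (Suc b) = real (Suc (Suc (a + b)))"
    by simp
  then show ?thesis
    by (simp only: Beta_def Gamma)
qed

lemma inverse_binomial_eq_Beta:
  assumes "k \<le> n"
  shows "1 / real (n choose k) = real (Suc n) * Beta (real (Suc k)) (real (Suc (n - k)))"
proof -
  have "fact n = fact k * fact (n - k) * real (n choose k)"
    using binomial_fact_lemma[OF assms] by (metis of_nat_fact of_nat_mult)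
  moreover have "Suc (k + (n - k)) = Suc n"
    using assms by simp
  ultimately show ?thesis
    unfolding Beta_of_nat by simp
qed

lemma has_integral_Beta_of_nat:
  "((\<lambda>t. t ^ a * (1 - t) ^ b) has_integral Beta (real (Suc a)) (real (Suc b))) {0..1}"
proof -
  have I: "((\<lambda>t. t powr real a * (1 - t) powr real b) has_integral Beta (real (Suc a)) (real (Suc b))) {0..1}"
    using has_integral_Beta_real[of "real (Suc a)" "real (Suc b)"] by simp
  show ?thesis
    by (rule has_integral_spike_finite[OF _ _ I, of "{0,1}"]) (auto simp: powr_realpow)
qed

lemma Beta_of_nat_plus1_plus1:
  "Beta (real (Suc (Suc a))) (real (Suc b)) + Beta (real (Suc a)) (real (Suc (Suc b)))
   = Beta (real (Suc a)) (real (Suc b))"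
proof -
  have nonpos: "real (Suc m) \<notin> \<int>\<^sub>\<le>\<^sub>0" for m
    by (simp only: of_nat_in_nonpos_Ints_iff)
  have plus1: "real (Suc m) + 1 = real (Suc (Suc m))" for m
    by simp
  show ?thesis
    by (rule Beta_plus1_plus1[OF nonpos nonpos, unfolded plus1])
qed

lemma Beta_of_nat_plus1_left:
  "real (Suc a + Suc b) * Beta (real (Suc (Suc a))) (real (Suc b))
   = real (Suc a) * Beta (real (Suc a)) (real (Suc b))"
proof -
  have nonpos: "real (Suc a) \<notin> \<int>\<^sub>\<le>\<^sub>0"
    by (simp only: of_nat_in_nonpos_Ints_iff)
  have plus1: "real (Suc a) + 1 = real (Suc (Suc a))"
    by simp
  show ?thesis
    using Beta_plus1_left[OF nonpos, of "real (Suc b)", unfolded plus1] by (simp only: of_nat_add)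
qed

lemma inverse_mult_binomial_eq_Beta:
  assumes "0 < k"
  shows "1 / (real k * real ((m + k) choose k)) = Beta (real k) (real (Suc m))"
proof -
  obtain j where k: "k = Suc j"
    using assms by (cases k) auto
  have "1 / real ((m + k) choose k) = real (Suc j + Suc m) * Beta (real (Suc k)) (real (Suc m))"
    using inverse_binomial_eq_Beta[of k "m + k"] k by simp
  also have "\<dots> = real k * Beta (real k) (real (Suc m))"
    unfolding k by (rule Beta_of_nat_plus1_left)
  finally show ?thesis
    using assms by (simp add: divide_simps mult_ac)
qed

section \<open>Sums of reciprocal binomial coefficients\<close>

lemma inverse_binomial_pair_sum:
  assumes "k \<le> n"
  shows "1 / real (Suc n choose k) + 1 / real (Suc n choose Suc k)
       = real (Suc (Suc n)) / (real (Suc n) * real (n choose k))"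
proof -
  have "k \<le> Suc n" "Suc n - k = Suc (n - k)" "Suc k \<le> Suc n" "Suc n - Suc k = n - k"
    using assms by auto
  note e1 = inverse_binomial_eq_Beta[OF this(1), unfolded this(2)]
   and e2 = inverse_binomial_eq_Beta[OF this(3), unfolded this(4)]
  have "1 / real (Suc n choose k) + 1 / real (Suc n choose Suc k)
      = real (Suc (Suc n)) * (Beta (real (Suc (Suc k))) (real (Suc (n - k)))
                              + Beta (real (Suc k)) (real (Suc (Suc (n - k)))))"
    unfolding e1 e2 by (simp only: distrib_left add.commute)
  also have "\<dots> = real (Suc (Suc n)) * Beta (real (Suc k)) (real (Suc (n - k)))"
    by (simp only: Beta_of_nat_plus1_plus1)
  also have "\<dots> = real (Suc (Suc n)) * ((1 / real (n choose k)) / real (Suc n))"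
    by (subst inverse_binomial_eq_Beta[OF assms]) simp
  finally show ?thesis
    by simp
qed

definition inverse_binomial_sum :: "nat \<Rightarrow> real" where
  "inverse_binomial_sum n = (\<Sum>k=0..n. 1 / real (n choose k))"

lemma inverse_binomial_sum_Suc:
  "inverse_binomial_sum (Suc n) = 1 + real (Suc (Suc n)) / (2 * real (Suc n)) * inverse_binomial_sum n"
proof -
  let ?L = "\<Sum>k=0..n. 1 / real (Suc n choose k)" and ?R = "\<Sum>k=0..n. 1 / real (Suc n choose Suc k)"
  have "inverse_binomial_sum (Suc n) = ?L + 1"
    unfolding inverse_binomial_sum_def by simp
  moreover have "inverse_binomial_sum (Suc n) = 1 + ?R"
    unfolding inverse_binomial_sum_def sum.atLeast0_atMost_Suc_shift by (simp del: binomial_Suc_Suc)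
  moreover have "?L + ?R = real (Suc (Suc n)) / real (Suc n) * inverse_binomial_sum n"
    unfolding inverse_binomial_sum_def sum.distrib[symmetric] sum_distrib_left
    by (rule sum.cong[OF refl]) (auto simp: inverse_binomial_pair_sum simp del: binomial_Suc_Suc)
  ultimately show ?thesis
    by (simp add: field_simps)
qed

definition Beta_power_sum :: "nat \<Rightarrow> real" where
  "Beta_power_sum m = (\<Sum>k=1..m. 2 ^ k * Beta (real k) (real (Suc m)))"

lemma Beta_power_sum_altdef:
  "Beta_power_sum m = (\<Sum>k=1..m. 2 ^ k / (real k * real ((m + k) choose k)))"
  unfolding Beta_power_sum_def
proof (rule sum.cong[OF refl])
  fix k assume "k \<in> {1..m}"
  then have "Beta (real k) (real (Suc m)) = 1 / (real k * real ((m + k) choose k))"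
    by (simp add: inverse_mult_binomial_eq_Beta)
  then show "2 ^ k * Beta (real k) (real (Suc m)) = 2 ^ k / (real k * real ((m + k) choose k))"
    by simp
qed

lemma Beta_power_sum_Suc: "Beta_power_sum (Suc m) = Beta_power_sum m / 2 + 1 / real (Suc m)"
proof -
  define T where "T k = 2 ^ k * Beta (real k) (real (Suc m))" for k
  txt \<open>\<open>B(k, m + 2) = B(k, m + 1) - B(k + 1, m + 1)\<close> splits each term into \<open>T k / 2\<close> and half
    of a telescoping difference, whose boundary terms are \<open>T 1 = 2 / (m + 1)\<close> and
    \<open>T (m + 2) = T (m + 1)\<close>.\<close>
  have step: "2 ^ k * Beta (real k) (real (Suc (Suc m))) = T k / 2 + (T k - T (Suc k)) / 2"
    if "k \<in> {1..Suc m}" for k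
  proof -
    from that obtain j where "k = Suc j"
      by (cases k) auto
    then have "Beta (real (Suc k)) (real (Suc m)) + Beta (real k) (real (Suc (Suc m))) = Beta (real k) (real (Suc m))"
      by (simp only: Beta_of_nat_plus1_plus1)
    then have B: "Beta (real k) (real (Suc (Suc m))) = Beta (real k) (real (Suc m)) - Beta (real (Suc k)) (real (Suc m))"
      by linarith
    show ?thesis
      unfolding T_def B by (simp add: field_simps)
  qed
  have "Beta_power_sum (Suc m) = (\<Sum>k=1..Suc m. T k) / 2 + (\<Sum>k=1..Suc m. T k - T (Suc k)) / 2"
    unfolding Beta_power_sum_def sum_divide_distrib sum.distrib[symmetric] by (rule sum.cong[OF refl step])
  also have "(\<Sum>k=1..Suc m. T k - T (Suc k)) = - (\<Sum>k=1..Suc m. T (Suc k) - T k)"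
    by (simp add: sum_negf[symmetric])
  also have "\<dots> = T 1 - T (Suc (Suc m))"
    by (simp add: sum_Suc_diff)
  also have "(\<Sum>k=1..Suc m. T k) = Beta_power_sum m + T (Suc m)"
    unfolding Beta_power_sum_def T_def by simp
  also have "T (Suc (Suc m)) = T (Suc m)"
  proof -
    have "real (Suc m) * (2 * Beta (real (Suc (Suc m))) (real (Suc m)))
        = real (Suc m) * Beta (real (Suc m)) (real (Suc m))"
      using Beta_of_nat_plus1_left[of m m] by (simp add: algebra_simps)
    then have "Beta (real (Suc m)) (real (Suc m)) = 2 * Beta (real (Suc (Suc m))) (real (Suc m))"
      by simp
    then show ?thesis
      unfolding T_def power_Suc by (simp only: mult_ac)
  qed
  also have "T 1 = 2 / real (Suc m)"
    unfolding T_def using Beta_of_nat[of 0 m] by simp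
  finally show ?thesis
    by (simp add: field_simps)
qed

lemma Beta_power_sum_eq: "Beta_power_sum m = (\<Sum>k=1..m. 2 ^ k / real k) / 2 ^ m"
proof (induction m)
  case 0
  then show ?case
    by (simp add: Beta_power_sum_def)
next
  case (Suc m)
  show ?case
    unfolding Beta_power_sum_Suc Suc.IH by (simp add: field_simps)
qed

lemma inverse_binomial_sum_eq_Beta_power_sum:
  "inverse_binomial_sum n = real (Suc n) * Beta_power_sum (Suc n)"
proof (induction n)
  case 0
  then show ?case
    using Beta_of_nat[of 0 1] by (simp add: inverse_binomial_sum_def Beta_power_sum_def)
next
  case (Suc n)
  then show ?case
    by (simp add: inverse_binomial_sum_Suc Beta_power_sum_Suc[of "Suc n"] field_simps)
qed

section \<open>Partial binomial row sums against powers\<close>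

lemma sum_triangle_swap:
  fixes g :: "nat \<Rightarrow> nat \<Rightarrow> 'a::comm_monoid_add"
  shows "(\<Sum>j=0..n. \<Sum>i=0..j. g i j) = (\<Sum>i=0..n. \<Sum>j=i..n. g i j)"
proof (induction n)
  case 0
  then show ?case by simp
next
  case (Suc n)
  have "(\<Sum>i=0..Suc n. \<Sum>j=i..Suc n. g i j) = (\<Sum>i=0..n. (\<Sum>j=i..n. g i j) + g i (Suc n)) + g (Suc n) (Suc n)"
    by (simp add: sum.cl_ivl_Suc)
  then show ?case
    using Suc by (simp add: sum.distrib)
qed

lemma power_sum_telescope:
  fixes a b :: "'a::comm_ring_1"
  assumes "i \<le> Suc n" "n \<le> m"
  shows "(b - a) * (\<Sum>j=i..n. a ^ j * b ^ (m - j)) = a ^ i * b ^ (Suc m - i) - a ^ Suc n * b ^ (m - n)"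
  using assms
proof (induction n)
  case 0
  then show ?case by (cases i) (auto simp: algebra_simps)
next
  case (Suc n)
  show ?case
  proof (cases "i = Suc (Suc n)")
    case True
    then show ?thesis using Suc.prems by (simp add: Suc_diff_Suc)
  next
    case False
    then have i: "i \<le> Suc n"
      using Suc.prems by simp
    have "b ^ (m - n) = b * b ^ (m - Suc n)"
      using Suc.prems by (simp add: Suc_diff_Suc flip: power_Suc)
    then show ?thesis
      using Suc.IH[OF i] Suc.prems i by (simp add: algebra_simps)
  qed
qed

lemma binomial_ring_partial:
  fixes a b :: "'a::comm_ring_1"
  shows "(\<Sum>i=0..n. of_nat (Suc n choose i) * a ^ i * b ^ (Suc n - i)) = (a + b) ^ Suc n - a ^ Suc n"
proof -
  have "(a + b) ^ Suc n = (\<Sum>i\<le>Suc n. of_nat (Suc n choose i) * a ^ i * b ^ (Suc n - i))"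
    by (rule binomial_ring)
  also have "\<dots> = (\<Sum>i=0..n. of_nat (Suc n choose i) * a ^ i * b ^ (Suc n - i)) + a ^ Suc n"
    by (simp add: atMost_atLeast0)
  finally show ?thesis
    by simp
qed

lemma binomial_row_partial_sum: "(\<Sum>i=0..n. of_nat (Suc n choose i) :: 'a::comm_ring_1) = 2 ^ Suc n - 1"
proof -
  have "(\<Sum>i=0..n. Suc n choose i) + 1 = 2 ^ Suc n"
    using choose_row_sum[of "Suc n"] by (simp add: atMost_atLeast0)
  then have "of_nat (\<Sum>i=0..n. Suc n choose i) + 1 = (2::'a) ^ Suc n"
    by (metis of_nat_1 of_nat_add of_nat_numeral of_nat_power)
  then show ?thesis
    by (simp add: eq_diff_eq)
qed

lemma diff_mult_partial_binomial_power_sum: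
  fixes a b :: "'a::comm_ring_1"
  assumes "a + b = 1"
  shows "(b - a) * (\<Sum>j=0..n. \<Sum>i=0..j. of_nat (Suc n choose i) * (a ^ j * b ^ (2*n+1 - j)))
       = b ^ Suc n * (1 - (2 * a) ^ Suc n)"
proof -
  have "(b - a) * (\<Sum>j=0..n. \<Sum>i=0..j. of_nat (Suc n choose i) * (a ^ j * b ^ (2*n+1 - j)))
      = (\<Sum>i=0..n. of_nat (Suc n choose i) * ((b - a) * (\<Sum>j=i..n. a ^ j * b ^ (2*n+1 - j))))"
    unfolding sum_triangle_swap by (simp add: sum_distrib_left mult_ac)
  also have "\<dots> = (\<Sum>i=0..n. b ^ Suc n * (of_nat (Suc n choose i) * a ^ i * b ^ (Suc n - i))
                              - (a * b) ^ Suc n * of_nat (Suc n choose i))"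
  proof (rule sum.cong[OF refl])
    fix i assume "i \<in> {0..n}"
    then have "(b - a) * (\<Sum>j=i..n. a ^ j * b ^ (2*n+1 - j)) = a ^ i * b ^ (Suc (2*n+1) - i) - a ^ Suc n * b ^ (2*n+1 - n)"
      by (intro power_sum_telescope) auto
    moreover have "Suc (2*n+1) - i = Suc n + (Suc n - i)" "2*n+1 - n = Suc n"
      using \<open>i \<in> {0..n}\<close> by auto
    ultimately show "of_nat (Suc n choose i) * ((b - a) * (\<Sum>j=i..n. a ^ j * b ^ (2*n+1 - j)))
             = b ^ Suc n * (of_nat (Suc n choose i) * a ^ i * b ^ (Suc n - i)) - (a * b) ^ Suc n * of_nat (Suc n choose i)"
      by (simp only: power_add power_mult_distrib) (simp add: algebra_simps)
  qed
  also have "\<dots> = b ^ Suc n * (\<Sum>i=0..n. of_nat (Suc n choose i) * a ^ i * b ^ (Suc n - i))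
                    - (a * b) ^ Suc n * (\<Sum>i=0..n. of_nat (Suc n choose i))"
    by (simp only: sum_subtractf sum_distrib_left)
  also have "\<dots> = b ^ Suc n * ((a + b) ^ Suc n - a ^ Suc n) - (a * b) ^ Suc n * ((1 + 1) ^ Suc n - 1)"
    unfolding binomial_ring_partial binomial_row_partial_sum by simp
  also have "\<dots> = b ^ Suc n * (1 - (2 * a) ^ Suc n)"
    using assms by (simp add: power_mult_distrib algebra_simps)
  finally show ?thesis .
qed

lemma partial_binomial_power_sum_eq_geometric:
  fixes t :: real
  assumes "t \<noteq> 1/2"
  shows "(\<Sum>j=0..n. \<Sum>i=0..j. real (Suc n choose i) * (t ^ j * (1 - t) ^ (2*n+1 - j)))
       = (\<Sum>k=0..n. 2 ^ k * (t ^ k * (1 - t) ^ Suc n))"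
proof -
  have "1 - (2 * t) ^ Suc n = (1 - 2 * t) * (\<Sum>k=0..n. 2 ^ k * t ^ k)"
    using one_diff_power_eq[of "2 * t" "Suc n"]
    by (simp add: power_mult_distrib atLeast0AtMost lessThan_Suc_atMost)
  then have "(1 - 2 * t) * (\<Sum>k=0..n. 2 ^ k * (t ^ k * (1 - t) ^ Suc n)) = (1 - t) ^ Suc n * (1 - (2 * t) ^ Suc n)"
    by (simp add: sum_distrib_left sum_distrib_right mult_ac)
  also have "\<dots> = (1 - 2 * t) * (\<Sum>j=0..n. \<Sum>i=0..j. real (Suc n choose i) * (t ^ j * (1 - t) ^ (2*n+1 - j)))"
    using diff_mult_partial_binomial_power_sum[where a = t and b = "1 - t"] by simp
  finally show ?thesis
    using assms by simp
qed

lemma has_integral_partial_binomial_power_sum: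
  "((\<lambda>t. \<Sum>j=0..n. \<Sum>i=0..j. real (Suc n choose i) * (t ^ j * (1 - t) ^ (2*n+1 - j))) has_integral
     (\<Sum>j=0..n. \<Sum>i=0..j. real (Suc n choose i) / real ((2*n+1) choose j)) / real (2 * Suc n)) {0..1}"
proof -
  have "((\<lambda>t. \<Sum>j=0..n. \<Sum>i=0..j. real (Suc n choose i) * (t ^ j * (1 - t) ^ (2*n+1 - j))) has_integral
          (\<Sum>j=0..n. \<Sum>i=0..j. real (Suc n choose i) * Beta (real (Suc j)) (real (Suc (2*n+1 - j))))) {0..1}"
    by (intro has_integral_sum finite_atLeastAtMost has_integral_mult_right has_integral_Beta_of_nat)
  moreover have "(\<Sum>j=0..n. \<Sum>i=0..j. real (Suc n choose i) * Beta (real (Suc j)) (real (Suc (2*n+1 - j))))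
      = (\<Sum>j=0..n. \<Sum>i=0..j. real (Suc n choose i) / real ((2*n+1) choose j)) / real (2 * Suc n)"
    unfolding sum_divide_distrib
  proof (intro sum.cong refl)
    fix j i assume "j \<in> {0..n}"
    then have "j \<le> 2*n+1"
      by simp
    then have "Beta (real (Suc j)) (real (Suc (2*n+1 - j))) = 1 / real ((2*n+1) choose j) / real (Suc (2*n+1))"
      by (subst inverse_binomial_eq_Beta) simp_all
    then show "real (Suc n choose i) * Beta (real (Suc j)) (real (Suc (2*n+1 - j)))
             = real (Suc n choose i) / real ((2*n+1) choose j) / real (2 * Suc n)"
      by simp
  qed
  ultimately show ?thesis
    by simp
qed

lemma partial_binomial_quotient_sum:
  "(\<Sum>j=0..n. \<Sum>i=0..j. real (Suc n choose i) / real ((2*n+1) choose j))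
   = real (Suc n) * Beta_power_sum (Suc n)"
proof -
  let ?f = "\<lambda>t. \<Sum>j=0..n. \<Sum>i=0..j. real (Suc n choose i) * (t ^ j * (1 - t) ^ (2*n+1 - j))"
  let ?g = "\<lambda>t. \<Sum>k=0..n. 2 ^ k * (t ^ k * (1 - t) ^ Suc n)"
  have "(?g has_integral (\<Sum>k=0..n. 2 ^ k * Beta (real (Suc k)) (real (Suc (Suc n))))) {0..1}"
    by (intro has_integral_sum finite_atLeastAtMost has_integral_mult_right has_integral_Beta_of_nat)
  moreover have "Beta_power_sum (Suc n) = (\<Sum>k=0..n. 2 ^ Suc k * Beta (real (Suc k)) (real (Suc (Suc n))))"
    unfolding Beta_power_sum_def One_nat_def sum.shift_bounds_cl_Suc_ivl ..
  ultimately have "(?g has_integral Beta_power_sum (Suc n) / 2) {0..1}"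
    by (simp add: sum_divide_distrib)
  then have "(?f has_integral Beta_power_sum (Suc n) / 2) {0..1}"
  proof (rule has_integral_spike_finite[where S = "{1/2}", rotated 2])
    fix t :: real
    assume "t \<in> {0..1} - {1/2}"
    then show "?f t = ?g t"
      by (intro partial_binomial_power_sum_eq_geometric) auto
  qed simp
  from has_integral_unique[OF has_integral_partial_binomial_power_sum this] show ?thesis
    by (simp add: field_simps)
qed

section \<open>Fibonacci polynomials\<close>

definition fibonacci_poly :: "'a::comm_ring_1 \<Rightarrow> nat \<Rightarrow> 'a" where
  "fibonacci_poly x n = (\<Sum>k\<le>n. of_nat ((n - k) choose k) * x ^ k)"

lemma fibonacci_poly_Suc_Suc:
  "fibonacci_poly x (Suc (Suc n)) = fibonacci_poly x (Suc n) + x * fibonacci_poly x n"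
proof -
  have pascal: "of_nat ((Suc n - k) choose Suc k) * x ^ Suc k
      = of_nat ((n - k) choose Suc k) * x ^ Suc k + x * (of_nat ((n - k) choose k) * x ^ k)"
    if "k \<in> {..Suc n}" for k
  proof (cases "k \<le> n")
    case True
    then have "Suc n - k = Suc (n - k)"
      by simp
    then show ?thesis
      by (simp add: algebra_simps)
  next
    case False
    with that have "k = Suc n"
      by simp
    then show ?thesis
      by simp
  qed
  have first: "fibonacci_poly x (Suc (Suc n)) = 1 + (\<Sum>k\<le>Suc n. of_nat ((Suc n - k) choose Suc k) * x ^ Suc k)"
    unfolding fibonacci_poly_def sum.atMost_Suc_shift[of _ "Suc n"] by simp
  have split: "(\<Sum>k\<le>Suc n. of_nat ((Suc n - k) choose Suc k) * x ^ Suc k)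
      = (\<Sum>k\<le>Suc n. of_nat ((n - k) choose Suc k) * x ^ Suc k) + x * (\<Sum>k\<le>Suc n. of_nat ((n - k) choose k) * x ^ k)"
    unfolding sum_distrib_left sum.distrib[symmetric] by (rule sum.cong[OF refl pascal])
  have "fibonacci_poly x (Suc n) = 1 + (\<Sum>k\<le>n. of_nat ((n - k) choose Suc k) * x ^ Suc k)"
    unfolding fibonacci_poly_def sum.atMost_Suc_shift[of _ n] by simp
  then have "1 + (\<Sum>k\<le>Suc n. of_nat ((n - k) choose Suc k) * x ^ Suc k) = fibonacci_poly x (Suc n)"
    by simp
  moreover have "(\<Sum>k\<le>Suc n. of_nat ((n - k) choose k) * x ^ k) = fibonacci_poly x n"
    unfolding fibonacci_poly_def by simp
  ultimately show ?thesis
    unfolding first split by (simp only: add.assoc[symmetric])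
qed

lemma fibonacci_poly_altdef:
  "fibonacci_poly x n = (\<Sum>k=0..n div 2. of_nat ((n - k) choose k) * x ^ k)"
  unfolding fibonacci_poly_def
proof (rule sum.mono_neutral_right)
  show "\<forall>k\<in>{..n} - {0..n div 2}. of_nat ((n - k) choose k) * x ^ k = 0"
  proof
    fix k assume "k \<in> {..n} - {0..n div 2}"
    then have "n - k < k"
      by auto
    then show "of_nat ((n - k) choose k) * x ^ k = 0"
      by (simp add: binomial_eq_0)
  qed
qed auto

definition hom_power_sum :: "'a::comm_ring_1 \<Rightarrow> 'a \<Rightarrow> nat \<Rightarrow> 'a" where
  "hom_power_sum a b n = (\<Sum>j\<le>n. a ^ j * b ^ (n - j))"

lemma hom_power_sum_Suc: "hom_power_sum a b (Suc n) = b * hom_power_sum a b n + a ^ Suc n"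
proof -
  have "(\<Sum>j\<le>n. a ^ j * b ^ (Suc n - j)) = b * hom_power_sum a b n"
    unfolding hom_power_sum_def sum_distrib_left
    by (rule sum.cong) (auto simp: Suc_diff_le algebra_simps)
  then show ?thesis
    unfolding hom_power_sum_def by simp
qed

lemma hom_power_sum_Suc_Suc:
  "hom_power_sum a b (Suc (Suc n)) = (a + b) * hom_power_sum a b (Suc n) - a * b * hom_power_sum a b n"
  using hom_power_sum_Suc[of a b n] hom_power_sum_Suc[of a b "Suc n"] by (simp add: algebra_simps)

lemma fibonacci_poly_eq_hom_power_sum:
  assumes "a + b = 1"
  shows "fibonacci_poly (- (a * b)) n = hom_power_sum a b n"
proof -
  have "fibonacci_poly (- (a * b)) n = hom_power_sum a b n
      \<and> fibonacci_poly (- (a * b)) (Suc n) = hom_power_sum a b (Suc n)"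
  proof (induction n)
    case 0
    then show ?case
      using assms by (simp add: fibonacci_poly_def hom_power_sum_def add.commute)
  next
    case (Suc n)
    then show ?case
      using assms by (simp add: fibonacci_poly_Suc_Suc hom_power_sum_Suc_Suc)
  qed
  then show ?thesis ..
qed

lemma has_integral_hom_power_sum:
  "((\<lambda>t. hom_power_sum t (1 - t) n) has_integral inverse_binomial_sum n / real (Suc n)) {0..1}"
proof -
  have "((\<lambda>t. \<Sum>j\<le>n. t ^ j * (1 - t) ^ (n - j)) has_integral (\<Sum>j\<le>n. Beta (real (Suc j)) (real (Suc (n - j))))) {0..1}"
    by (intro has_integral_sum finite_atMost has_integral_Beta_of_nat)
  moreover have "(\<Sum>j\<le>n. Beta (real (Suc j)) (real (Suc (n - j)))) = inverse_binomial_sum n / real (Suc n)"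
    unfolding inverse_binomial_sum_def sum_divide_distrib atLeast0AtMost
    by (rule sum.cong) (simp_all add: inverse_binomial_eq_Beta)
  ultimately show ?thesis
    unfolding hom_power_sum_def by simp
qed

lemma binomial_odd_div_binomial_eq_Beta:
  assumes "2 * k \<le> n"
  shows "real (Suc n choose (2 * k + 1)) / real (n choose k)
       = real (Suc n) * real ((n - k) choose k) * Beta (real (Suc k)) (real (Suc k))"
proof -
  have "2 * k + 1 \<le> Suc n" "k \<le> n" "k \<le> n - k"
    using assms by auto
  moreover have "Suc n - (2 * k + 1) = n - 2 * k" "n - k - k = n - 2 * k" "Suc (k + k) = 2 * k + 1"
    by auto
  ultimately have
    X: "real (Suc n choose (2 * k + 1)) = fact (Suc n) / (fact (2 * k + 1) * fact (n - 2 * k))" and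
    Y: "real (n choose k) = fact n / (fact k * fact (n - k))" and
    Z: "real ((n - k) choose k) = fact (n - k) / (fact k * fact (n - 2 * k))"
    by (simp_all only: binomial_fact)
  show ?thesis
    unfolding X Y Z Beta_of_nat \<open>Suc (k + k) = 2 * k + 1\<close> fact_Suc[of n]
    by (simp add: field_simps del: fact_Suc)
qed

lemma alternating_binomial_quotient_sum:
  "(\<Sum>k=0..n div 2. (-1) ^ k * real (Suc n choose (2*k+1)) / real (n choose k)) = inverse_binomial_sum n"
proof -
  let ?S = "\<Sum>k=0..n div 2. (-1) ^ k * real (Suc n choose (2*k+1)) / real (n choose k)"
  let ?I = "\<Sum>k=0..n div 2. real ((n - k) choose k) * ((-1) ^ k * Beta (real (Suc k)) (real (Suc k)))"
  have hom: "hom_power_sum t (1 - t) n = (\<Sum>k=0..n div 2. real ((n - k) choose k) * ((-1) ^ k * (t ^ k * (1 - t) ^ k)))"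
    for t :: real
  proof -
    have "hom_power_sum t (1 - t) n = fibonacci_poly (- (t * (1 - t))) n"
      by (rule fibonacci_poly_eq_hom_power_sum[symmetric]) simp
    then show ?thesis
      unfolding fibonacci_poly_altdef by (simp only: power_minus[of "t * (1 - t)"] power_mult_distrib)
  qed
  have "((\<lambda>t. hom_power_sum t (1 - t) n) has_integral ?I) {0..1}"
    unfolding hom by (intro has_integral_sum finite_atLeastAtMost has_integral_mult_right has_integral_Beta_of_nat)
  then have "?I = inverse_binomial_sum n / real (Suc n)"
    using has_integral_hom_power_sum by (rule has_integral_unique)
  moreover have "?I = ?S / real (Suc n)"
    unfolding sum_divide_distrib
  proof (rule sum.cong[OF refl])
    fix k assume "k \<in> {0..n div 2}"
    then have "2 * k \<le> n"
      by auto
    then show "real ((n - k) choose k) * ((-1) ^ k * Beta (real (Suc k)) (real (Suc k)))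
             = (-1) ^ k * real (Suc n choose (2*k+1)) / real (n choose k) / real (Suc n)"
      unfolding times_divide_eq_right[symmetric] binomial_odd_div_binomial_eq_Beta[OF \<open>2 * k \<le> n\<close>]
      by simp
  qed
  ultimately show ?thesis
    by simp
qed

section \<open>Complementary partial row sums\<close>

lemma partial_binomial_sums_complement:
  assumes "j \<le> n"
  shows "(\<Sum>i=0..j. Suc n choose i) + (\<Sum>i=0..n - j. Suc n choose i) = 2 ^ Suc n"
  using assms
proof (induction j)
  case 0
  have "(\<Sum>i=0..n. Suc n choose i) + 1 = 2 ^ Suc n"
    using choose_row_sum[of "Suc n"] by (simp add: atMost_atLeast0)
  then show ?case
    by simp
next
  case (Suc j)
  have "n - j = Suc (n - Suc j)"
    using Suc.prems by simp
  moreover have "Suc n choose (n - j) = Suc n choose Suc j"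
    using binomial_symmetric[of "Suc j" "Suc n"] Suc.prems by (simp add: Suc_diff_le)
  ultimately have "(\<Sum>i=0..n - j. Suc n choose i) = (\<Sum>i=0..n - Suc j. Suc n choose i) + (Suc n choose Suc j)"
    by (simp del: binomial_Suc_Suc)
  moreover have "(\<Sum>i=0..Suc j. Suc n choose i) = (\<Sum>i=0..j. Suc n choose i) + (Suc n choose Suc j)"
    by (simp del: binomial_Suc_Suc)
  moreover have "(\<Sum>i=0..j. Suc n choose i) + (\<Sum>i=0..n - j. Suc n choose i) = 2 ^ Suc n"
    using Suc by simp
  ultimately show ?case
    by linarith
qed

lemma partial_binomial_sums_quotient_sum:
  "(\<Sum>j=0..n. \<Sum>i=0..j. real (Suc n choose i) / real (n choose j)) = 2 ^ n * inverse_binomial_sum n"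
proof -
  define P where "P j = real (\<Sum>i=0..j. Suc n choose i)" for j
  have "(\<Sum>j=0..n. \<Sum>i=0..j. real (Suc n choose i) / real (n choose j)) = (\<Sum>j=0..n. P j / real (n choose j))"
    unfolding P_def by (simp add: sum_divide_distrib)
  also have "\<dots> = (\<Sum>j=0..n. P (n - j) / real (n choose j))"
    by (subst sum.atLeastAtMost_rev) (auto intro!: sum.cong simp: binomial_symmetric[symmetric])
  finally have "2 * (\<Sum>j=0..n. \<Sum>i=0..j. real (Suc n choose i) / real (n choose j))
              = (\<Sum>j=0..n. (P j + P (n - j)) / real (n choose j))"
    unfolding P_def by (simp add: add_divide_distrib sum.distrib sum_divide_distrib)
  also have "\<dots> = (\<Sum>j=0..n. 2 ^ Suc n / real (n choose j))"
    unfolding P_def of_nat_add[symmetric]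
    by (rule sum.cong) (simp_all add: partial_binomial_sums_complement)
  also have "\<dots> = 2 * (2 ^ n * inverse_binomial_sum n)"
    unfolding inverse_binomial_sum_def by (simp add: sum_distrib_left)
  finally show ?thesis
    by simp
qed

theorem proposition1:
  fixes n :: nat
  defines "S1 \<equiv> (\<Sum>j=0..n. \<Sum>i=0..j. real (Suc n choose i) / real ((2*n+1) choose j))"
      and "S2 \<equiv> (\<Sum>k=0..n div 2. (-1)^k * real (Suc n choose (2*k+1)) / real (n choose k))"
      and "S3 \<equiv> real (n+1) * (\<Sum>k=1..n+1. 2^k / (real k * real ((n+1+k) choose k)))"
      and "S4 \<equiv> real (n+1) / 2^(n+1) * (\<Sum>k=1..n+1. 2^k / real k)"
      and "S5 \<equiv> 1 / 2^n * (\<Sum>j=0..n. \<Sum>i=0..j. real (Suc n choose i) / real (n choose j))"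
  shows "S1 = S2 \<and> S2 = S3 \<and> S3 = S4 \<and> S4 = S5"
proof -
  have S1: "S1 = real (Suc n) * Beta_power_sum (Suc n)"
    unfolding S1_def by (rule partial_binomial_quotient_sum)
  have S2: "S2 = inverse_binomial_sum n"
    unfolding S2_def by (rule alternating_binomial_quotient_sum)
  have S3: "S3 = real (Suc n) * Beta_power_sum (Suc n)"
    unfolding S3_def Beta_power_sum_altdef by simp
  have S4: "S4 = real (Suc n) * Beta_power_sum (Suc n)"
    unfolding S4_def Beta_power_sum_eq by simp
  have S5: "S5 = inverse_binomial_sum n"
    unfolding S5_def partial_binomial_sums_quotient_sum by simp
  show ?thesis
    using S1 S2 S3 S4 S5 inverse_binomial_sum_eq_Beta_power_sum[of n] by simp
qed

end
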